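(* Let $T$ be a tiling and let $I=\{a,a+1,\dots,b\}$ with $2\le a\le b\le n-1$ be an interval contained in the basis $B(T)$. Then every triple $ijk\in\Lambda$ with $a-1\le i<j<k\le b+1$ belongs to $T$; i.e. $T(ext(I))\subseteq T$, where $ext(I)=\{a-1,\dots,b+1\}$ and $T(ext(I))$ is the set of all triples contained in $ext(I)$.
   Context: Fix an integer $n\ge 3$ and write $[n]=\{1,\dots,n\}$. Let $\Lambda$ be the set of 3-element subsets of $[n]$; a triple $\{i,j,k\}$ with $i<j<k$ is written $ijk$. For a 4-element subset $F=\{i<j<k<l\}$ of $[n]$, the stick of $F$ is the sequence $(ijk,\ ijl,\ ikl,\ jkl)$. A tiling (the inversion set of a rhombus tiling of the zonogon $Z(n;2)$) is a subset $T\subseteq\Lambda$ such that for every 4-element $F\subseteq[n]$, $T\cap\mathrm{stick}(F)$ is an initial segment or a final segment of the stick (empty set and whole stick allowed). The basis of a tiling $T$ is $B(T)=\{j\in\{2,\dots,n-1\}: (j-1)\,j\,(j+1)\in T\}$. *)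

theory Defs
  imports Main
begin

definition Lambda :: "nat \<Rightarrow> (nat \<times> nat \<times> nat) set" where
  "Lambda n = {(i,j,k). 1 \<le> i \<and> i < j \<and> j < k \<and> k \<le> n}"

definition stick :: "nat \<Rightarrow> nat \<Rightarrow> nat \<Rightarrow> nat \<Rightarrow> (nat \<times> nat \<times> nat) list" where
  "stick i j k l = [(i,j,k), (i,j,l), (i,k,l), (j,k,l)]"

definition init_or_final :: "(nat \<times> nat \<times> nat) set \<Rightarrow> (nat \<times> nat \<times> nat) list \<Rightarrow> bool" where
  "init_or_final T s \<longleftrightarrow>
     (\<exists>m \<le> length s. T \<inter> set s = set (take m s) \<or> T \<inter> set s = set (drop m s))"

definition tiling :: "nat \<Rightarrow> (nat \<times> nat \<times> nat) set \<Rightarrow> bool" where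
  "tiling n T \<longleftrightarrow> T \<subseteq> Lambda n \<and>
     (\<forall>i j k l. 1 \<le> i \<and> i < j \<and> j < k \<and> k < l \<and> l \<le> n \<longrightarrow> init_or_final T (stick i j k l))"

definition basis :: "nat \<Rightarrow> (nat \<times> nat \<times> nat) set \<Rightarrow> nat set" where
  "basis n T = {j. 2 \<le> j \<and> j \<le> n - 1 \<and> (j - 1, j, j + 1) \<in> T}"

end

theory Submission
  imports Defs
begin

text \<open>Every triple over an interval is reached from the consecutive triples (j-1, j, j+1) by
  induction on its width k - i: splitting off the inner point next to one end exhibits
  (i, j, k) as a middle element of a stick whose first and last elements are narrower, and a
  stick meeting T in an initial or final segment contains its middle as soon as it contains
  both ends.\<close>

lemma init_or_final_set_subset:
  assumes "init_or_final T s" and "distinct s" and "s \<noteq> []"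
    and "hd s \<in> T" and "last s \<in> T"
  shows "set s \<subseteq> T"
proof -
  obtain m where "m \<le> length s"
    and segment: "T \<inter> set s = set (take m s) \<or> T \<inter> set s = set (drop m s)"
    using assms(1) unfolding init_or_final_def by blast
  have disjoint: "set (take m s) \<inter> set (drop m s) = {}"
    using set_take_disj_set_drop_if_distinct[OF assms(2) order_refl] .
  from segment show ?thesis
  proof
    assume take: "T \<inter> set s = set (take m s)"
    have "m = length s"
    proof (rule ccontr)
      assume "m \<noteq> length s"
      with \<open>m \<le> length s\<close> have "last s \<in> set (drop m s)"
        using last_in_set[of "drop m s"] by simp
      moreover have "last s \<in> set (take m s)"
        using take assms(5) last_in_set[OF assms(3)] by blast
      ultimately show False
        using disjoint by blast
    qed
    with take show ?thesis by auto
  next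
    assume drop: "T \<inter> set s = set (drop m s)"
    have "m = 0"
    proof (rule ccontr)
      assume "m \<noteq> 0"
      then have "hd s \<in> set (take m s)"
        using assms(3) hd_in_set[of "take m s"] hd_take[of m s] by simp
      moreover have "hd s \<in> set (drop m s)"
        using drop assms(4) hd_in_set[OF assms(3)] by blast
      ultimately show False
        using disjoint by blast
    qed
    with drop show ?thesis by auto
  qed
qed

lemma tiling_stick_ends_imp_middle:
  assumes "tiling n T" and "1 \<le> i" "i < j" "j < k" "k < l" "l \<le> n"
    and "(i, j, k) \<in> T" "(j, k, l) \<in> T"
  shows "(i, j, l) \<in> T" "(i, k, l) \<in> T"
proof -
  have "init_or_final T (stick i j k l)"
    using assms(1-6) unfolding tiling_def by blast
  moreover have "distinct (stick i j k l)"
    using assms(3-5) unfolding stick_def by auto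
  ultimately have "set (stick i j k l) \<subseteq> T"
    using assms(7,8) by (intro init_or_final_set_subset) (auto simp: stick_def)
  then show "(i, j, l) \<in> T" "(i, k, l) \<in> T"
    unfolding stick_def by auto
qed

lemma tiling_triples_in_interval:
  assumes "tiling n T" and "1 \<le> p" and "q \<le> n"
    and consecutive: "\<And>j. p < j \<Longrightarrow> j < q \<Longrightarrow> (j - 1, j, j + 1) \<in> T"
    and "p \<le> i" "i < j" "j < k" "k \<le> q"
  shows "(i, j, k) \<in> T"
  using assms(5-)
proof (induction "k - i" arbitrary: i j k rule: less_induct)
  case less
  consider "k = i + 2" | "j = i + 1" "i + 2 < k" | "i + 1 < j"
    using less.prems by linarith
  then show ?case
  proof cases
    case 1
    then have "j = i + 1"
      using less.prems by linarith
    then show ?thesis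
      using consecutive[of j] less.prems 1 by fastforce
  next
    case 2
    have "(i, j, k - 1) \<in> T" "(j, k - 1, k) \<in> T"
      using 2 less.prems by (auto intro!: less.hyps)
    then show ?thesis
      using tiling_stick_ends_imp_middle(1)[OF assms(1), of i j "k - 1" k] 2 less.prems assms(2,3)
      by auto
  next
    case 3
    have "(i, i + 1, j) \<in> T" "(i + 1, j, k) \<in> T"
      using 3 less.prems by (auto intro!: less.hyps)
    then show ?thesis
      using tiling_stick_ends_imp_middle(2)[OF assms(1), of i "i + 1" j k] 3 less.prems assms(2,3)
      by auto
  qed
qed

theorem lemma5:
  fixes n a b :: nat and T :: "(nat \<times> nat \<times> nat) set"
  assumes "n \<ge> 3"
    and "tiling n T"
    and "2 \<le> a" and "a \<le> b" and "b \<le> n - 1"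
    and "{a..b} \<subseteq> basis n T"
  shows "\<forall>i j k. a - 1 \<le> i \<and> i < j \<and> j < k \<and> k \<le> b + 1 \<longrightarrow> (i, j, k) \<in> T"
proof (intro allI impI)
  fix i j k
  assume ijk: "a - 1 \<le> i \<and> i < j \<and> j < k \<and> k \<le> b + 1"
  show "(i, j, k) \<in> T"
  proof (rule tiling_triples_in_interval[OF assms(2)])
    fix j
    assume "a - 1 < j" "j < b + 1"
    then have "j \<in> basis n T"
      using assms(3,6) by auto
    then show "(j - 1, j, j + 1) \<in> T"
      unfolding basis_def by simp
  qed (use ijk assms(3,5) in linarith)+
qed

end
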